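(* Let $m\ge1$ and let $X\subset\sqrt{m}\,\mathbb{S}^{m-1}$ be a spherical $2$-design with $|X|=n$ which is an $s$-distance set of degree $S=s$. If $\frac1n q_i((nG)^\circ)=F_i$ for all $i\in\{0,1,\dots,s\}$, then $X$ carries a $Q$-polynomial association scheme; namely $X$ has the structure of a $Q$-polynomial association scheme with respect to the idempotents $F_0,\dots,F_s$.
   Context: $\sqrt{m}\,\mathbb{S}^{m-1}=\{\bm x\in\mathbb{R}^m:\bm x\cdot\bm x=m\}$. $A(X)=\{\bm x\cdot\bm y:\bm x\ne\bm y\in X\}$, $A'(X)=A(X)\cup\{m\}$; $s$-distance set: $|A(X)|=s$. Spherical $2$-design: the average over $X$ of every polynomial of degree $\le2$ equals its average over the sphere. $C(X)$: real functions on $X$ with $(f,g)=\frac1n\sum f g$; $\zeta_{\bm a}(p)(\bm x)=p(\bm a\cdot\bm x)$; $\mathrm{Pol}_0$ = constants, $\mathrm{Pol}_1=\mathrm{Span}\{\zeta_{\bm a}(p):\deg p\le1\}$, $\mathrm{Pol}_k=\mathrm{Span}\{fg:f\in\mathrm{Pol}_1,g\in\mathrm{Pol}_{k-1}\}$; degree $S=\min\{i:\mathrm{Pol}_i(X)=C(X)\}$; $\mathrm{Harm}_0=\mathrm{Pol}_0$, $\mathrm{Harm}_k=\mathrm{Pol}_k\cap\mathrm{Pol}_{k-1}^\perp$; $F_i$ ($0\le i\le S$) is the matrix of the orthogonal projection onto $\mathrm{Harm}_i(X)$, with $(Mf)(\bm x)=\sum_{\bm y}M_{\bm x,\bm y}f(\bm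 y)$. $G=\frac1n(\bm x\cdot\bm y)_{\bm x,\bm y}$; $p(M^\circ)$ is entrywise application of $p$. $\kappa_\alpha=|\{(\bm x,\bm y)\in X^2:\bm x\cdot\bm y=\alpha\}|$, $\langle p,q\rangle=\frac1{n^2}\sum_{\alpha\in A'(X)}\kappa_\alpha p(\alpha)q(\alpha)$; predegree polynomials $q_0,\dots,q_s$: $\deg q_k=k$, $\langle q_k,q_h\rangle=\delta_{k,h}q_k(m)$. With $R_\alpha=\{(\bm x,\bm y):\bm x\cdot\bm y=\alpha\}$, "$X$ has the structure of a $Q$-polynomial association scheme with respect to the idempotents $F_0,\dots,F_s$" means $(X,\{R_\alpha\}_{\alpha\in A'(X)})$ is a symmetric association scheme (the span of the adjacency matrices of the $R_\alpha$ is closed under matrix multiplication, with the standard axioms) whose primitive idempotents are $F_0,\dots,F_s$, and for each $i$ there is a polynomial $v_i^*$ of degree $i$ with $nF_i=v_i^*((nF_1)^\circ)$. *)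

theory Defs
  imports "HOL-Analysis.Analysis" "HOL-Computational_Algebra.Polynomial"
begin

text \<open>Functions on a finite set X of points, represented as total functions that
  vanish outside X (the space C(X)).  Matrices indexed by X are functions
  'a => 'a => real, of which only the entries on X x X are relevant.\<close>

definition onX :: "'a set \<Rightarrow> ('a \<Rightarrow> real) \<Rightarrow> ('a \<Rightarrow> real)" where
  "onX X f = (\<lambda>x. if x \<in> X then f x else 0)"

definition CX :: "'a set \<Rightarrow> ('a \<Rightarrow> real) set" where
  "CX X = {f. \<forall>x. x \<notin> X \<longrightarrow> f x = 0}"

definition lin_span :: "'a set \<Rightarrow> ('a \<Rightarrow> real) set \<Rightarrow> ('a \<Rightarrow> real) set" where
  "lin_span X F = {onX X (\<lambda>x. \<Sum>i<k. c i * g i x) | (k::nat) c g. \<forall>i<k. g i \<in> F}"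

definition ipX :: "'a set \<Rightarrow> ('a \<Rightarrow> real) \<Rightarrow> ('a \<Rightarrow> real) \<Rightarrow> real" where
  "ipX X f g = (1 / real (card X)) * (\<Sum>x\<in>X. f x * g x)"

definition zeta :: "'a::real_inner \<Rightarrow> real poly \<Rightarrow> 'a \<Rightarrow> real" where
  "zeta a p = (\<lambda>x. poly p (a \<bullet> x))"

fun Pol :: "'a::real_inner set \<Rightarrow> nat \<Rightarrow> ('a \<Rightarrow> real) set" where
  "Pol X 0 = lin_span X {\<lambda>x. 1}"
| "Pol X (Suc 0) = lin_span X {zeta a p | a p. degree p \<le> 1}"
| "Pol X (Suc (Suc k)) =
     lin_span X {(\<lambda>x. f x * g x) | f g. f \<in> Pol X (Suc 0) \<and> g \<in> Pol X (Suc k)}"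

fun Harm :: "'a::real_inner set \<Rightarrow> nat \<Rightarrow> ('a \<Rightarrow> real) set" where
  "Harm X 0 = Pol X 0"
| "Harm X (Suc k) = {f \<in> Pol X (Suc k). \<forall>g \<in> Pol X k. ipX X f g = 0}"

definition design_degree :: "'a::real_inner set \<Rightarrow> nat" where
  "design_degree X = (LEAST i. Pol X i = CX X)"

definition matvec :: "'a set \<Rightarrow> ('a \<Rightarrow> 'a \<Rightarrow> real) \<Rightarrow> ('a \<Rightarrow> real) \<Rightarrow> ('a \<Rightarrow> real)" where
  "matvec X M f = onX X (\<lambda>x. \<Sum>y\<in>X. M x y * f y)"

definition proj_mat :: "'a set \<Rightarrow> ('a \<Rightarrow> real) set \<Rightarrow> ('a \<Rightarrow> 'a \<Rightarrow> real)" where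
  "proj_mat X H = (THE M. (\<forall>x y. \<not> (x \<in> X \<and> y \<in> X) \<longrightarrow> M x y = 0) \<and>
      (\<forall>f \<in> CX X. matvec X M f \<in> H \<and>
          (\<forall>h \<in> H. ipX X (\<lambda>x. f x - matvec X M f x) h = 0)))"

definition Fmat :: "'a::real_inner set \<Rightarrow> nat \<Rightarrow> ('a \<Rightarrow> 'a \<Rightarrow> real)" where
  "Fmat X i = proj_mat X (Harm X i)"

definition on_sphere :: "'a::euclidean_space set \<Rightarrow> bool" where
  "on_sphere X \<longleftrightarrow> (\<forall>x\<in>X. x \<bullet> x = real DIM('a))"

text \<open>Spherical 2-design on the sphere of radius sqrt m: the averages over X of
  all polynomials of degree <= 2 equal the sphere averages.  The sphere averages
  of 1, of the linear forms a.x, and of the quadratic forms (a.x)(b.x) on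
  sqrt(m) S^(m-1) are 1, 0 and a.b respectively, so the condition reads:\<close>
definition design2 :: "'a::euclidean_space set \<Rightarrow> bool" where
  "design2 X \<longleftrightarrow>
     (\<forall>a. (1 / real (card X)) * (\<Sum>x\<in>X. a \<bullet> x) = 0) \<and>
     (\<forall>a b. (1 / real (card X)) * (\<Sum>x\<in>X. (a \<bullet> x) * (b \<bullet> x)) = a \<bullet> b)"

definition Aset :: "'a::real_inner set \<Rightarrow> real set" where
  "Aset X = {x \<bullet> y | x y. x \<in> X \<and> y \<in> X \<and> x \<noteq> y}"

definition Aset' :: "'a::euclidean_space set \<Rightarrow> real set" where
  "Aset' X = insert (real DIM('a)) (Aset X)"

definition kappa :: "'a::real_inner set \<Rightarrow> real \<Rightarrow> nat" where
  "kappa X \<alpha> = card {(x, y). x \<in> X \<and> y \<in> X \<and> x \<bullet> y = \<alpha>}"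

definition pre_ip :: "'a::euclidean_space set \<Rightarrow> real poly \<Rightarrow> real poly \<Rightarrow> real" where
  "pre_ip X p q = (1 / (real (card X))^2) *
     (\<Sum>\<alpha>\<in>Aset' X. real (kappa X \<alpha>) * poly p \<alpha> * poly q \<alpha>)"

definition predegree_polys :: "'a::euclidean_space set \<Rightarrow> nat \<Rightarrow> (nat \<Rightarrow> real poly) \<Rightarrow> bool" where
  "predegree_polys X s q \<longleftrightarrow>
     (\<forall>k\<le>s. degree (q k) = k) \<and>
     (\<forall>k\<le>s. \<forall>h\<le>s. pre_ip X (q k) (q h) =
         (if k = h then poly (q k) (real DIM('a)) else 0))"

definition matmul :: "'a set \<Rightarrow> ('a \<Rightarrow> 'a \<Rightarrow> real) \<Rightarrow> ('a \<Rightarrow> 'a \<Rightarrow> real) \<Rightarrow> ('a \<Rightarrow> 'a \<Rightarrow> real)" where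
  "matmul X M N = (\<lambda>x y. \<Sum>z\<in>X. M x z * N z y)"

definition adj :: "('a \<times> 'a) set \<Rightarrow> 'a \<Rightarrow> 'a \<Rightarrow> real" where
  "adj R x y = (if (x, y) \<in> R then 1 else 0)"

definition sym_assoc_scheme :: "'a set \<Rightarrow> 'i set \<Rightarrow> ('i \<Rightarrow> ('a \<times> 'a) set) \<Rightarrow> bool" where
  "sym_assoc_scheme X I R \<longleftrightarrow>
     finite X \<and> finite I \<and>
     (\<forall>i\<in>I. R i \<noteq> {} \<and> R i \<subseteq> X \<times> X) \<and>
     (\<forall>i\<in>I. \<forall>j\<in>I. i \<noteq> j \<longrightarrow> R i \<inter> R j = {}) \<and>
     (\<Union>i\<in>I. R i) = X \<times> X \<and>
     (\<exists>i0\<in>I. R i0 = Id_on X) \<and>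
     (\<forall>i\<in>I. converse (R i) = R i) \<and>
     (\<forall>i\<in>I. \<forall>j\<in>I. \<forall>k\<in>I. \<exists>p::nat. \<forall>(x, y)\<in>R k.
         card {z\<in>X. (x, z) \<in> R i \<and> (z, y) \<in> R j} = p)"

definition primitive_idempotents ::
  "'a set \<Rightarrow> 'i set \<Rightarrow> ('i \<Rightarrow> ('a \<times> 'a) set) \<Rightarrow> (nat \<Rightarrow> 'a \<Rightarrow> 'a \<Rightarrow> real) \<Rightarrow> nat \<Rightarrow> bool" where
  "primitive_idempotents X I R F s \<longleftrightarrow>
     (\<forall>i\<le>s. \<exists>c. \<forall>x\<in>X. \<forall>y\<in>X. F i x y = (\<Sum>\<alpha>\<in>I. c \<alpha> * adj (R \<alpha>) x y)) \<and>
     (\<forall>i\<le>s. \<exists>x\<in>X. \<exists>y\<in>X. F i x y \<noteq> 0) \<and>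
     (\<forall>i\<le>s. \<forall>j\<le>s. \<forall>x\<in>X. \<forall>y\<in>X.
         matmul X (F i) (F j) x y = (if i = j then F i x y else 0)) \<and>
     (\<forall>x\<in>X. \<forall>y\<in>X. (\<Sum>i\<le>s. F i x y) = (if x = y then 1 else 0)) \<and>
     (\<forall>\<alpha>\<in>I. \<exists>c. \<forall>x\<in>X. \<forall>y\<in>X. adj (R \<alpha>) x y = (\<Sum>i\<le>s. c i * F i x y))"

definition Q_poly_scheme :: "'a::euclidean_space set \<Rightarrow> (nat \<Rightarrow> 'a \<Rightarrow> 'a \<Rightarrow> real) \<Rightarrow> nat \<Rightarrow> bool" where
  "Q_poly_scheme X F s \<longleftrightarrow>
     (let R = (\<lambda>\<alpha>. {(x, y). x \<in> X \<and> y \<in> X \<and> x \<bullet> y = \<alpha>}); n = real (card X) in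
       sym_assoc_scheme X (Aset' X) R \<and>
       primitive_idempotents X (Aset' X) R F s \<and>
       (\<forall>i\<le>s. \<exists>v::real poly. degree v = i \<and>
          (\<forall>x\<in>X. \<forall>y\<in>X. n * F i x y = poly v (n * F 1 x y))))"

end

theory Submission
  imports Defs "HOL-Library.Function_Algebras"
begin

text \<open>F_0, ..., F_s are the orthogonal projections of C(X) onto the mutually orthogonal
  spaces Harm_i, hence mutually orthogonal idempotents, and by hypothesis
  F_i(x, y) = q_i(x.y)/n.  On the s + 1 points of A'(X) the weights kappa_alpha/n^2 are
  positive and make q_0, ..., q_s orthogonal, so the q_i are nonzero, span the
  polynomials of degree at most s, and in particular express the indicator of every
  alpha in A'(X).  Hence each adjacency matrix of R_alpha is a combination of the F_i
  and vice versa; products of adjacency matrices stay in this span, which yields the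
  intersection numbers, and the orthogonality relations normalized at m give
  F_0 + ... + F_s = I.  Finally q_1 has degree 1, so F_i = v_i(n F_1) with v_i the
  composition of q_i with the inverse of q_1.\<close>

section \<open>Orthogonal projections in C(X)\<close>

global_interpretation real_fun: vector_space "\<lambda>(c::real) (f::'a \<Rightarrow> real) x. c * f x"
  by unfold_locales (auto simp: fun_eq_iff algebra_simps)

definition inner_on :: "'a set \<Rightarrow> ('a \<Rightarrow> real) \<Rightarrow> ('a \<Rightarrow> real) \<Rightarrow> real" where
  "inner_on X f g = (\<Sum>x\<in>X. f x * g x)"

lemma inner_on_commute: "inner_on X f g = inner_on X g f"
  by (simp add: inner_on_def mult.commute)

lemma inner_on_add_right: "inner_on X f (\<lambda>x. g x + h x) = inner_on X f g + inner_on X f h"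
  by (simp add: inner_on_def distrib_left sum.distrib)

lemma inner_on_scale_right: "inner_on X f (\<lambda>x. c * g x) = c * inner_on X f g"
  by (simp add: inner_on_def sum_distrib_left algebra_simps)

lemma inner_on_diff_left: "inner_on X (\<lambda>x. g x - h x) f = inner_on X g f - inner_on X h f"
  by (simp add: inner_on_def left_diff_distrib sum_subtractf)

lemma inner_on_scale_left: "inner_on X (\<lambda>x. c * g x) f = c * inner_on X g f"
  by (simp add: inner_on_def sum_distrib_left algebra_simps)

lemma inner_on_self_eq_0:
  "finite X \<Longrightarrow> inner_on X f f = 0 \<Longrightarrow> x \<in> X \<Longrightarrow> f x = 0"
  unfolding inner_on_def using sum_nonneg_eq_0_iff[of X "\<lambda>x. f x * f x"] by auto

definition is_proj_mat :: "'a set \<Rightarrow> ('a \<Rightarrow> real) set \<Rightarrow> ('a \<Rightarrow> 'a \<Rightarrow> real) \<Rightarrow> bool" where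
  "is_proj_mat X H M \<longleftrightarrow> (\<forall>x y. \<not> (x \<in> X \<and> y \<in> X) \<longrightarrow> M x y = 0) \<and>
      (\<forall>f \<in> CX X. matvec X M f \<in> H \<and>
          (\<forall>h \<in> H. inner_on X (\<lambda>x. f x - matvec X M f x) h = 0))"

lemma proj_mat_eq_The:
  assumes "finite X" "X \<noteq> {}"
  shows "proj_mat X H = (THE M. is_proj_mat X H M)"
proof -
  have "ipX X f g = 0 \<longleftrightarrow> inner_on X f g = 0" for f g
    using assms by (simp add: ipX_def inner_on_def)
  then show ?thesis unfolding proj_mat_def is_proj_mat_def by presburger
qed

lemma matvec_in_CX: "matvec X M f \<in> CX X"
  by (simp add: matvec_def onX_def CX_def)

lemma indicator_in_CX: "b \<in> X \<Longrightarrow> indicator {b} \<in> CX X"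
  by (auto simp: CX_def indicator_def)

lemma matvec_indicator:
  assumes "finite X" "b \<in> X"
  shows "matvec X M (indicator {b}) x = (if x \<in> X then M x b else 0)"
  using assms by (simp add: matvec_def onX_def indicator_def of_bool_def
      if_distrib[of "\<lambda>t. _ * t"] sum.delta' cong: if_cong)

lemma is_proj_mat_zero: "is_proj_mat X H M \<Longrightarrow> \<not> (x \<in> X \<and> y \<in> X) \<Longrightarrow> M x y = 0"
  unfolding is_proj_mat_def by blast

lemma is_proj_mat_range: "is_proj_mat X H M \<Longrightarrow> f \<in> CX X \<Longrightarrow> matvec X M f \<in> H"
  unfolding is_proj_mat_def by blast

lemma is_proj_mat_residual_orth:
  "is_proj_mat X H M \<Longrightarrow> f \<in> CX X \<Longrightarrow> h \<in> H \<Longrightarrow> inner_on X (\<lambda>x. f x - matvec X M f x) h = 0"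
  unfolding is_proj_mat_def by blast

lemma eq_on_if_residuals_orth:
  assumes "finite X" "x \<in> X"
    and "inner_on X (\<lambda>x. f x - u x) (\<lambda>x. u x - v x) = 0"
    and "inner_on X (\<lambda>x. f x - v x) (\<lambda>x. u x - v x) = 0"
  shows "u x = v x"
proof -
  let ?d = "\<lambda>x. u x - v x"
  have "inner_on X ?d ?d = inner_on X (\<lambda>x. (f x - v x) - (f x - u x)) ?d"
    by simp
  also have "\<dots> = inner_on X (\<lambda>x. f x - v x) ?d - inner_on X (\<lambda>x. f x - u x) ?d"
    by (rule inner_on_diff_left)
  also have "\<dots> = 0"
    using assms(3,4) by simp
  finally have "?d x = 0" by (rule inner_on_self_eq_0[OF assms(1) _ assms(2)])
  then show ?thesis by simp
qed

lemma CX_eqI: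
  assumes "f \<in> CX X" "g \<in> CX X" "\<And>x. x \<in> X \<Longrightarrow> f x = g x"
  shows "f = g"
proof
  fix x show "f x = g x" using assms unfolding CX_def by (cases "x \<in> X") auto
qed

lemma is_proj_mat_unique:
  assumes X: "finite X" and H: "real_fun.subspace H"
    and M: "is_proj_mat X H M" and M': "is_proj_mat X H M'"
  shows "M = M'"
proof (intro ext)
  fix a b
  show "M a b = M' a b"
  proof (cases "a \<in> X \<and> b \<in> X")
    case False
    then show ?thesis using is_proj_mat_zero[OF M] is_proj_mat_zero[OF M'] by simp
  next
    case True
    let ?e = "indicator {b} :: _ \<Rightarrow> real"
    have e: "?e \<in> CX X" using True by (simp add: indicator_in_CX)
    have "matvec X M ?e - matvec X M' ?e \<in> H"
      using is_proj_mat_range[OF M e] is_proj_mat_range[OF M' e] H by (rule_tac real_fun.subspace_diff)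
    then have d: "(\<lambda>x. matvec X M ?e x - matvec X M' ?e x) \<in> H" unfolding fun_diff_def .
    have "matvec X M ?e a = matvec X M' ?e a"
      using True by (intro eq_on_if_residuals_orth[OF X _
          is_proj_mat_residual_orth[OF M e d] is_proj_mat_residual_orth[OF M' e d]]) simp
    then show ?thesis using True matvec_indicator[OF X] by simp
  qed
qed

lemma is_proj_mat_fixes:
  assumes X: "finite X" and H: "real_fun.subspace H" "H \<subseteq> CX X"
    and M: "is_proj_mat X H M" and h: "h \<in> H"
  shows "matvec X M h = h"
proof (rule CX_eqI[OF matvec_in_CX])
  have hC: "h \<in> CX X" using h H by auto
  then show "h \<in> CX X" .
  have "matvec X M h - h \<in> H" using is_proj_mat_range[OF M hC] h H(1) by (rule_tac real_fun.subspace_diff)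
  then have d: "(\<lambda>x. matvec X M h x - h x) \<in> H" unfolding fun_diff_def .
  fix x assume "x \<in> X"
  then show "matvec X M h x = h x"
    by (rule eq_on_if_residuals_orth[OF X _ is_proj_mat_residual_orth[OF M hC d]])
      (simp add: inner_on_def)
qed

lemma is_proj_mat_annihilates:
  assumes X: "finite X" and M: "is_proj_mat X H M"
    and f: "f \<in> CX X" and orth: "\<forall>h\<in>H. inner_on X f h = 0"
  shows "matvec X M f = 0"
proof (rule CX_eqI[OF matvec_in_CX])
  show "0 \<in> CX X" by (simp add: CX_def)
  let ?u = "matvec X M f"
  have u: "?u \<in> H" using is_proj_mat_range[OF M f] .
  have "inner_on X ?u ?u = inner_on X f ?u - inner_on X (\<lambda>x. f x - ?u x) ?u"
    unfolding inner_on_diff_left by simp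
  also have "\<dots> = 0" using orth u is_proj_mat_residual_orth[OF M f u] by simp
  finally show "?u x = 0 x" if "x \<in> X" for x
    using inner_on_self_eq_0[OF X _ that] by simp
qed

lemma sum_fun_apply: "(\<Sum>y\<in>A. (F y :: 'a \<Rightarrow> real)) x = (\<Sum>y\<in>A. F y x)"
  by (induction A rule: infinite_finite_induct) auto

lemma CX_subset_span_indicators:
  assumes "finite X" shows "CX X \<subseteq> real_fun.span ((\<lambda>b. indicator {b}) ` X)"
proof
  fix f assume f: "f \<in> CX X"
  have "f = (\<Sum>y\<in>X. (\<lambda>x. f y * indicator {y} x))"
  proof
    fix x show "f x = (\<Sum>y\<in>X. (\<lambda>x. f y * indicator {y} x)) x"
      unfolding sum_fun_apply using f assms
      by (cases "x \<in> X") (auto simp: CX_def indicator_def of_bool_def if_distrib[of "\<lambda>t. f _ * t"] sum.delta cong: if_cong)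
  qed
  also have "\<dots> \<in> real_fun.span ((\<lambda>b. indicator {b}) ` X)"
    by (intro real_fun.span_sum real_fun.span_scale real_fun.span_base) simp
  finally show "f \<in> real_fun.span ((\<lambda>b. indicator {b}) ` X)" .
qed

lemma subspace_CX_finite_spanning:
  assumes X: "finite X" and H: "real_fun.subspace H" "H \<subseteq> CX X"
  obtains B where "finite B" "B \<subseteq> H" "real_fun.span B = H"
proof -
  obtain B where B: "B \<subseteq> H" "real_fun.independent B" "H \<subseteq> real_fun.span B"
    using real_fun.maximal_independent_subset[of H] by blast
  have "B \<subseteq> real_fun.span ((\<lambda>b. indicator {b}) ` X)" using B(1) H(2) CX_subset_span_indicators[OF X] by blast
  then have "finite B" using real_fun.independent_span_bound B(2) X by blast
  then show ?thesis using that B(1) real_fun.span_subspace[OF B(1) B(3) H(1)] by blast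
qed

lemma matvec_rank_one_update:
  assumes "r \<in> CX X"
  shows "matvec X (\<lambda>x y. M x y + c * (r x * r y)) f = (\<lambda>x. matvec X M f x + c * inner_on X r f * r x)"
proof
  fix x show "matvec X (\<lambda>x y. M x y + c * (r x * r y)) f x = matvec X M f x + c * inner_on X r f * r x"
    using assms by (cases "x \<in> X")
      (auto simp: matvec_def onX_def CX_def inner_on_def distrib_right sum.distrib
         sum_distrib_left algebra_simps)
qed

lemma inner_on_span_insert_eq_0:
  assumes "\<forall>v\<in>real_fun.span B. inner_on X u v = 0" "inner_on X u g = 0"
    and "h \<in> real_fun.span (insert g B)"
  shows "inner_on X u h = 0"
proof -
  obtain k where k: "h - (\<lambda>x. k * g x) \<in> real_fun.span B"
    using assms(3) real_fun.span_breakdown_eq by blast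
  define b where "b = h - (\<lambda>x. k * g x)"
  have "h = (\<lambda>x. b x + k * g x)" unfolding b_def by (simp add: fun_eq_iff)
  then have "inner_on X u h = inner_on X u b + k * inner_on X u g"
    by (simp add: inner_on_add_right inner_on_scale_right)
  then show ?thesis using assms(1,2) k unfolding b_def by simp
qed

text \<open>Gram-Schmidt step: the residual r of g is orthogonal to span B.\<close>
lemma is_proj_mat_insert:
  assumes X: "finite X" and M: "is_proj_mat X (real_fun.span B) M" and g: "g \<in> CX X"
    and r: "r = (\<lambda>x. g x - matvec X M g x)" and N: "inner_on X r r \<noteq> 0"
  shows "is_proj_mat X (real_fun.span (insert g B)) (\<lambda>x y. M x y + 1 / inner_on X r r * (r x * r y))"
    (is "is_proj_mat X ?H ?M")
proof -
  let ?N = "inner_on X r r"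
  have rC: "r \<in> CX X" using g matvec_in_CX[of X M g] unfolding r CX_def by auto
  have r_orth: "inner_on X r v = 0" if "v \<in> real_fun.span B" for v
    unfolding r using is_proj_mat_residual_orth[OF M g that] .
  have Mg: "matvec X M g \<in> real_fun.span B" using is_proj_mat_range[OF M g] .
  have "g - matvec X M g \<in> ?H"
    by (intro real_fun.span_diff real_fun.span_base set_mp[OF real_fun.span_mono Mg]) auto
  then have rH: "r \<in> ?H" unfolding r fun_diff_def .
  note mv = matvec_rank_one_update[OF rC, of M "1 / ?N"]
  show ?thesis
    unfolding is_proj_mat_def
  proof (intro conjI allI impI ballI)
    fix x y assume "\<not> (x \<in> X \<and> y \<in> X)"
    then show "?M x y = 0" using is_proj_mat_zero[OF M] rC unfolding CX_def by auto
  next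
    fix f assume f: "f \<in> CX X"
    let ?c = "1 / ?N * inner_on X r f"
    have Mf: "matvec X M f \<in> real_fun.span B" using is_proj_mat_range[OF M f] .
    have "matvec X M f + (\<lambda>x. ?c * r x) \<in> ?H"
      by (intro real_fun.span_add set_mp[OF real_fun.span_mono[OF subset_insertI] Mf]
          real_fun.span_scale rH)
    then show "matvec X ?M f \<in> ?H" unfolding mv by (simp add: plus_fun_def)
    define u where "u = (\<lambda>x. f x - matvec X ?M f x)"
    have u: "u = (\<lambda>x. (f x - matvec X M f x) - ?c * r x)" unfolding u_def mv by (simp add: fun_eq_iff)
    have uB: "\<forall>v\<in>real_fun.span B. inner_on X u v = 0"
      unfolding u inner_on_diff_left[of X "\<lambda>x. f x - matvec X M f x"] inner_on_scale_left
      using is_proj_mat_residual_orth[OF M f] r_orth by simp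
    have ur: "inner_on X u r = 0"
    proof -
      have "inner_on X u r = inner_on X f r - inner_on X (matvec X M f) r - ?c * ?N"
        unfolding u inner_on_diff_left inner_on_scale_left by simp
      also have "inner_on X (matvec X M f) r = 0" using r_orth[OF Mf] inner_on_commute by metis
      finally show ?thesis using N inner_on_commute[of X f r] by simp
    qed
    have "g = (\<lambda>x. r x + matvec X M g x)" unfolding r by simp
    then have "inner_on X u g = 0"
      using ur uB Mg inner_on_add_right[of X u r "matvec X M g"] by simp
    then show "inner_on X (\<lambda>x. f x - matvec X ?M f x) h = 0" if "h \<in> ?H" for h
      using inner_on_span_insert_eq_0[OF uB _ that] unfolding u_def by simp
  qed
qed

lemma is_proj_mat_span_exists:
  assumes X: "finite X"
  shows "finite B \<Longrightarrow> B \<subseteq> CX X \<Longrightarrow> \<exists>M. is_proj_mat X (real_fun.span B) M"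
proof (induction B rule: finite_induct)
  case empty
  have "is_proj_mat X (real_fun.span {}) (\<lambda>x y. 0)"
    by (simp add: is_proj_mat_def matvec_def onX_def inner_on_def zero_fun_def)
  then show ?case by blast
next
  case (insert g B)
  then obtain M where M: "is_proj_mat X (real_fun.span B) M" and g: "g \<in> CX X" by auto
  define r where "r = (\<lambda>x. g x - matvec X M g x)"
  show ?case
  proof (cases "inner_on X r r = 0")
    case True
    have "g = matvec X M g"
      using inner_on_self_eq_0[OF X True] g matvec_in_CX[of X M g]
      by (intro CX_eqI) (auto simp: r_def)
    then have "g \<in> real_fun.span B" using is_proj_mat_range[OF M g] by simp
    then show ?thesis using M real_fun.span_redundant by metis
  next
    case False
    then show ?thesis using is_proj_mat_insert[OF X M g r_def] by blast
  qed
qed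

lemma proj_mat_is_proj_mat:
  assumes X: "finite X" "X \<noteq> {}" and H: "real_fun.subspace H" "H \<subseteq> CX X"
  shows "is_proj_mat X H (proj_mat X H)"
proof -
  obtain B where "finite B" "B \<subseteq> H" "real_fun.span B = H"
    using subspace_CX_finite_spanning[OF X(1) H] .
  then obtain M where M: "is_proj_mat X H M"
    using is_proj_mat_span_exists[OF X(1)] H(2) by blast
  then have "\<exists>!M. is_proj_mat X H M"
    using is_proj_mat_unique[OF X(1) H(1)] by blast
  then show ?thesis unfolding proj_mat_eq_The[OF X] by (rule theI')
qed

section \<open>The spaces Pol_k(X) and Harm_k(X)\<close>

lemma ipX_eq_inner_on: "ipX X f g = inner_on X f g / real (card X)"
  by (simp add: ipX_def inner_on_def)

lemma lin_span_CX: "lin_span X F \<subseteq> CX X"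
  unfolding lin_span_def by (auto simp: onX_def CX_def)

lemma lin_span_single: "g \<in> F \<Longrightarrow> onX X g \<in> lin_span X F"
  unfolding lin_span_def
  by (intro CollectI exI[of _ 1] exI[of _ "\<lambda>_. 1"] exI[of _ "\<lambda>_. g"]) simp

lemma lin_span_mono: "F \<subseteq> G \<Longrightarrow> lin_span X F \<subseteq> lin_span X G"
  unfolding lin_span_def by blast

lemma sum_lessThan_add:
  fixes k1 k2 :: nat
  shows "(\<Sum>i<k1 + k2. f i) = (\<Sum>i<k1. f i) + (\<Sum>i<k2. f (k1 + i) :: 'a::comm_monoid_add)"
  by (induction k2) (auto simp: add.assoc)

lemma lin_span_subspace: "real_fun.subspace (lin_span X F)"
proof (rule real_fun.subspaceI)
  show "0 \<in> lin_span X F"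
    unfolding lin_span_def
    by (intro CollectI exI[of _ 0] exI[of _ "\<lambda>_. 0"] exI[of _ "\<lambda>_ _. 0"])
       (simp add: onX_def fun_eq_iff)
next
  fix f h assume "f \<in> lin_span X F" "h \<in> lin_span X F"
  then obtain k1 k2 :: nat and c1 g1 c2 g2
    where f: "f = onX X (\<lambda>x. \<Sum>i<k1. c1 i * g1 i x)" "\<forall>i<k1. g1 i \<in> F"
      and h: "h = onX X (\<lambda>x. \<Sum>i<k2. c2 i * g2 i x)" "\<forall>i<k2. g2 i \<in> F"
    unfolding lin_span_def by blast
  define c where "c = (\<lambda>i. if i < k1 then c1 i else c2 (i - k1))"
  define g where "g = (\<lambda>i. if i < k1 then g1 i else g2 (i - k1))"
  have "\<forall>i<k1 + k2. g i \<in> F" using f(2) h(2) unfolding g_def by auto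
  moreover have "f + h = onX X (\<lambda>x. \<Sum>i<k1 + k2. c i * g i x)"
    unfolding f h sum_lessThan_add by (simp add: c_def g_def onX_def fun_eq_iff)
  ultimately show "f + h \<in> lin_span X F" unfolding lin_span_def by blast
next
  fix a f assume "f \<in> lin_span X F"
  then obtain k :: nat and c g where f: "f = onX X (\<lambda>x. \<Sum>i<k. c i * g i x)" "\<forall>i<k. g i \<in> F"
    unfolding lin_span_def by blast
  have "(\<lambda>x. a * f x) = onX X (\<lambda>x. \<Sum>i<k. (a * c i) * g i x)"
    unfolding f by (simp add: onX_def fun_eq_iff sum_distrib_left mult.assoc)
  then show "(\<lambda>x. a * f x) \<in> lin_span X F"
    using f(2) unfolding lin_span_def by (intro CollectI exI[of _ k] exI[of _ "\<lambda>i. a * c i"] exI[of _ g]) simp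
qed

lemma Pol_CX: "Pol X k \<subseteq> CX X"
  by (induction X k rule: Pol.induct) (simp_all add: lin_span_CX)

lemma Pol_subspace: "real_fun.subspace (Pol X k)"
  by (induction X k rule: Pol.induct) (simp_all add: lin_span_subspace)

lemma const_one_zeta: "(\<lambda>x::'a::real_inner. 1) \<in> {zeta a p | a p. degree p \<le> 1}"
proof -
  have "(\<lambda>x::'a. 1::real) = zeta 0 [:1:]" by (simp add: zeta_def fun_eq_iff)
  then show ?thesis by fastforce
qed

lemma Pol_mono_Suc: "Pol X k \<subseteq> Pol X (Suc k)"
proof (cases k)
  case 0
  have "{\<lambda>x. 1} \<subseteq> {zeta a p | a p. degree p \<le> 1}" using const_one_zeta by blast
  from lin_span_mono[OF this, of X] 0 show ?thesis by simp
next
  case (Suc j)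
  show ?thesis
  proof
    fix f assume f: "f \<in> Pol X k"
    have fC: "f \<in> CX X" using f Pol_CX by blast
    have one: "onX X (\<lambda>x. 1) \<in> Pol X (Suc 0)" using lin_span_single[OF const_one_zeta] by simp
    have "(\<lambda>x. onX X (\<lambda>x. 1) x * f x) = f"
      using fC by (auto simp: onX_def CX_def fun_eq_iff)
    moreover have "onX X f = f" using fC by (auto simp: onX_def CX_def fun_eq_iff)
    ultimately have "onX X (\<lambda>x. onX X (\<lambda>x. 1) x * f x) = f" by simp
    moreover have "onX X (\<lambda>x. onX X (\<lambda>x. 1) x * f x) \<in> Pol X (Suc (Suc j))"
      using one f Suc by (simp only: Pol.simps) (intro lin_span_single; blast)
    ultimately show "f \<in> Pol X (Suc k)" using Suc by simp
  qed
qed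

lemma Pol_mono: "i \<le> j \<Longrightarrow> Pol X i \<subseteq> Pol X j"
  by (induction j rule: dec_induct) (use Pol_mono_Suc in blast)+

lemma Harm_Pol: "Harm X k \<subseteq> Pol X k"
  by (cases k) auto

lemma Harm_CX: "Harm X k \<subseteq> CX X"
  using Harm_Pol Pol_CX by blast

lemma Harm_Suc_iff:
  "f \<in> Harm X (Suc k) \<longleftrightarrow> f \<in> Pol X (Suc k) \<and> (\<forall>g\<in>Pol X k. inner_on X f g = 0)"
  by (cases "card X = 0") (auto simp: ipX_eq_inner_on inner_on_def card_eq_0_iff)

lemma Harm_subspace: "real_fun.subspace (Harm X k)"
proof (cases k)
  case 0
  then show ?thesis by (simp add: lin_span_subspace)
next
  case (Suc j)
  have P: "real_fun.subspace (Pol X (Suc j))" by (rule Pol_subspace)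
  show ?thesis unfolding Suc
  proof (rule real_fun.subspaceI)
    show "0 \<in> Harm X (Suc j)" using P unfolding Harm_Suc_iff by (simp add: real_fun.subspace_0 inner_on_def)
  next
    fix f h assume "f \<in> Harm X (Suc j)" "h \<in> Harm X (Suc j)"
    then show "f + h \<in> Harm X (Suc j)"
      using P unfolding Harm_Suc_iff by (simp add: real_fun.subspace_add inner_on_def distrib_right sum.distrib)
  next
    fix a f assume "f \<in> Harm X (Suc j)"
    then show "(\<lambda>x. a * f x) \<in> Harm X (Suc j)"
      using P unfolding Harm_Suc_iff by (simp add: real_fun.subspace_scale inner_on_scale_left)
  qed
qed

lemma Harm_orthogonal:
  assumes "i \<noteq> j" "f \<in> Harm X i" "h \<in> Harm X j"
  shows "inner_on X f h = 0"
proof -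
  have *: "inner_on X f h = 0" if "i < j" "f \<in> Harm X i" "h \<in> Harm X j" for i j f h
  proof -
    obtain j' where j: "j = Suc j'" using \<open>i < j\<close> by (cases j) auto
    have "f \<in> Pol X j'" using Harm_Pol Pol_mono[of i j' X] that j by auto
    then show ?thesis using that(3) unfolding j Harm_Suc_iff by (simp add: inner_on_commute)
  qed
  show ?thesis
    using assms *[of i j f h] *[of j i h f] inner_on_commute[of X f h] by (cases "i < j") auto
qed

lemma Fmat_is_proj_mat: "finite X \<Longrightarrow> X \<noteq> {} \<Longrightarrow> is_proj_mat X (Harm X i) (Fmat X i)"
  unfolding Fmat_def by (rule proj_mat_is_proj_mat[OF _ _ Harm_subspace Harm_CX])

lemma Fmat_mult:
  assumes X: "finite X" "X \<noteq> {}" and x: "x \<in> X" and y: "y \<in> X"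
  shows "matmul X (Fmat X i) (Fmat X j) x y = (if i = j then Fmat X i x y else 0)"
proof -
  note F = Fmat_is_proj_mat[OF X]
  let ?v = "matvec X (Fmat X j) (indicator {y})"
  have vH: "?v \<in> Harm X j" using is_proj_mat_range[OF F indicator_in_CX[OF y]] .
  have v: "?v z = Fmat X j z y" if "z \<in> X" for z
    using matvec_indicator[OF X(1) y] that by simp
  have "matmul X (Fmat X i) (Fmat X j) x y = (\<Sum>z\<in>X. Fmat X i x z * ?v z)"
    unfolding matmul_def by (intro sum.cong) (simp_all add: v)
  also have "\<dots> = matvec X (Fmat X i) ?v x"
    using x unfolding matvec_def[of X "Fmat X i"] onX_def by simp
  also have "\<dots> = (if i = j then ?v x else 0)"
  proof (cases "i = j")
    case True
    then show ?thesis using is_proj_mat_fixes[OF X(1) Harm_subspace Harm_CX F vH] by simp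
  next
    case False
    then have "j \<noteq> i" by simp
    then have "\<forall>h\<in>Harm X i. inner_on X ?v h = 0" using Harm_orthogonal[OF _ vH] by blast
    then have "matvec X (Fmat X i) ?v = 0" by (rule is_proj_mat_annihilates[OF X(1) F matvec_in_CX])
    then show ?thesis using False by simp
  qed
  finally show ?thesis using x matvec_indicator[OF X(1) y] by simp
qed

text \<open>F_0 fixes the constant function 1 on X, so it is not the zero matrix.\<close>
lemma Fmat_0_nonzero:
  assumes X: "finite X" "X \<noteq> {}"
  obtains x y where "x \<in> X" "y \<in> X" "Fmat X 0 x y \<noteq> 0"
proof -
  let ?e = "onX X (\<lambda>x. 1)"
  have "?e \<in> Harm X 0" using lin_span_single[of "\<lambda>x. 1" "{\<lambda>x. 1}" X] by simp
  then have fix1: "matvec X (Fmat X 0) ?e = ?e"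
    by (rule is_proj_mat_fixes[OF X(1) Harm_subspace Harm_CX Fmat_is_proj_mat[OF X]])
  obtain x where x: "x \<in> X" using X(2) by blast
  have "(\<Sum>y\<in>X. Fmat X 0 x y) = 1"
    using fun_cong[OF fix1, of x] x by (simp add: matvec_def onX_def cong: sum.cong)
  then obtain y where "y \<in> X" "Fmat X 0 x y \<noteq> 0"
    using sum.neutral[of X "Fmat X 0 x"] by fastforce
  then show ?thesis using that x by blast
qed

section \<open>Polynomials orthogonal for positive weights on a finite set\<close>

lemma weighted_sum_poly_square_pos:
  fixes A :: "real set" and p :: "real poly"
  assumes A: "finite A" "degree p < card A" and W: "\<forall>a\<in>A. W a > 0" and p: "p \<noteq> 0"
  shows "(\<Sum>a\<in>A. W a * poly p a * poly p a) > 0"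
proof -
  have nonneg: "\<forall>a\<in>A. 0 \<le> W a * poly p a * poly p a"
    using W by (simp add: mult.assoc less_imp_le)
  have "\<not> A \<subseteq> {x. poly p x = 0}"
  proof
    assume "A \<subseteq> {x. poly p x = 0}"
    then have "card A \<le> card {x. poly p x = 0}" by (rule card_mono[OF poly_roots_finite[OF p]])
    also have "\<dots> \<le> degree p" by (rule card_poly_roots_bound[OF p])
    finally show False using A(2) by simp
  qed
  then obtain a where a: "a \<in> A" "poly p a \<noteq> 0" by blast
  have "0 < poly p a * poly p a" using a(2) not_real_square_gt_zero by blast
  then have "W a * (poly p a * poly p a) > 0" using W a(1) by (simp add: mult_pos_pos)
  then have "(\<Sum>a\<in>A. W a * (poly p a * poly p a)) > 0"
    using nonneg by (intro sum_pos2[OF A(1) a(1)]) (auto simp: mult.assoc)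
  then show ?thesis by (simp add: mult.assoc)
qed

lemma poly_in_span_of_degree_sequence:
  fixes q :: "nat \<Rightarrow> real poly"
  assumes "\<forall>k\<le>d. q k \<noteq> 0 \<and> degree (q k) = k" and "degree p \<le> d"
  shows "\<exists>c. p = (\<Sum>i\<le>d. smult (c i) (q i))"
  using assms
proof (induction d arbitrary: p)
  case 0
  then have q0: "degree (q 0) = 0" "q 0 \<noteq> 0" by auto
  then have "coeff (q 0) 0 \<noteq> 0" by (metis degree_0_id pCons_0_0)
  then have "p = smult (coeff p 0 / coeff (q 0) 0) (q 0)"
    using degree_0_id[OF q0(1)] degree_0_id[of p] 0 by (metis le_zero_eq smult_pCons smult_0_right nonzero_divide_eq_eq)
  then show ?case by (intro exI[of _ "\<lambda>_. coeff p 0 / coeff (q 0) 0"]) simp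
next
  case (Suc d)
  let ?Q = "q (Suc d)"
  have Q: "degree ?Q = Suc d" "?Q \<noteq> 0" using Suc.prems by auto
  define a where "a = coeff p (Suc d) / lead_coeff ?Q"
  have "degree (p - smult a ?Q) \<le> d"
  proof (rule degree_le, intro allI impI)
    fix i assume "d < i"
    show "coeff (p - smult a ?Q) i = 0"
    proof (cases "i = Suc d")
      case True
      have "lead_coeff ?Q \<noteq> 0" using Q(2) by simp
      then show ?thesis using Q(1) True by (simp add: a_def)
    next
      case False
      then have "degree p < i" "degree ?Q < i" using \<open>d < i\<close> Q Suc.prems(2) by auto
      then show ?thesis by (simp add: coeff_eq_0)
    qed
  qed
  then obtain c where "p - smult a ?Q = (\<Sum>i\<le>d. smult (c i) (q i))" using Suc by auto
  then have "p = (\<Sum>i\<le>Suc d. smult ((c(Suc d := a)) i) (q i))" by (simp add: algebra_simps)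
  then show ?case by blast
qed

lemma lagrange_basis_poly_exists:
  fixes A :: "real set"
  assumes A: "finite A" and al: "\<alpha> \<in> A"
  obtains p where "degree p < card A" "\<forall>b\<in>A. poly p b = (if b = \<alpha> then 1 else 0)"
proof -
  define L where "L = (\<Prod>b\<in>A - {\<alpha>}. [:- b, 1:])"
  have "degree L \<le> sum (degree \<circ> (\<lambda>b. [:- b, 1:])) (A - {\<alpha>})"
    unfolding L_def using A by (intro degree_prod_sum_le) simp
  also have "\<dots> < card A" using A al card_gt_0_iff[of A] by auto
  finally have dL: "degree L < card A" .
  have Lv: "poly L b = (\<Prod>c\<in>A - {\<alpha>}. b - c)" for b unfolding L_def poly_prod by simp
  have "poly L \<alpha> \<noteq> 0" unfolding Lv using A by simp
  moreover have "poly L b = 0" if "b \<in> A" "b \<noteq> \<alpha>" for b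
    unfolding Lv using A that by (intro prod_zero) auto
  ultimately show ?thesis
    using that[of "smult (1 / poly L \<alpha>) L"] dL by simp
qed

lemma point_indicator_expansion:
  fixes A :: "real set" and q :: "nat \<Rightarrow> real poly"
  assumes A: "finite A" "card A = Suc s" "\<alpha> \<in> A"
    and q: "\<forall>k\<le>s. q k \<noteq> 0 \<and> degree (q k) = k"
  obtains c where "\<forall>b\<in>A. (if b = \<alpha> then 1 else 0) = (\<Sum>i\<le>s. c i * poly (q i) b)"
proof -
  obtain p where p: "degree p < card A" "\<forall>b\<in>A. poly p b = (if b = \<alpha> then 1 else 0)"
    using lagrange_basis_poly_exists[OF A(1,3)] .
  obtain c where "p = (\<Sum>i\<le>s. smult (c i) (q i))"
    using poly_in_span_of_degree_sequence[OF q, of p] p(1) A(2) by auto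
  then show ?thesis using that[of c] p(2) by (simp add: poly_sum)
qed

text \<open>The expansion coefficients of the indicator of m are read off by pairing
  with q_j, using the orthogonality relations normalized at m.\<close>
lemma orthogonal_polys_indicator_at_norm_point:
  fixes A :: "real set" and q :: "nat \<Rightarrow> real poly" and W :: "real \<Rightarrow> real"
  assumes A: "finite A" "card A = Suc s" "m \<in> A"
    and q: "\<forall>k\<le>s. q k \<noteq> 0 \<and> degree (q k) = k" "\<forall>k\<le>s. poly (q k) m \<noteq> 0"
    and orth: "\<forall>k\<le>s. \<forall>h\<le>s.
      (\<Sum>a\<in>A. W a * poly (q k) a * poly (q h) a) = (if k = h then poly (q k) m else 0)"
    and b: "b \<in> A"
  shows "(if b = m then 1 else 0) = W m * (\<Sum>i\<le>s. poly (q i) b)"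
proof -
  obtain c where c: "\<forall>b\<in>A. (if b = m then 1 else 0) = (\<Sum>i\<le>s. c i * poly (q i) b)"
    using point_indicator_expansion[OF A q(1)] .
  have "c j = W m" if j: "j \<le> s" for j
  proof -
    have "W m * poly (q j) m = (\<Sum>b\<in>A. W b * (if b = m then 1 else 0) * poly (q j) b)"
      using A by (simp add: if_distrib[of "\<lambda>t. _ * t * _"] sum.delta' cong: if_cong)
    also have "\<dots> = (\<Sum>b\<in>A. W b * (\<Sum>i\<le>s. c i * poly (q i) b) * poly (q j) b)"
      using c by (intro sum.cong) auto
    also have "\<dots> = (\<Sum>i\<le>s. c i * (\<Sum>b\<in>A. W b * poly (q i) b * poly (q j) b))"
      by (simp add: sum_distrib_left sum_distrib_right sum.swap[of _ A] algebra_simps)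
    also have "\<dots> = (\<Sum>i\<le>s. c i * (if i = j then poly (q i) m else 0))"
      using orth j by (intro sum.cong) auto
    also have "\<dots> = c j * poly (q j) m"
      using j by (simp add: if_distrib[of "\<lambda>t. _ * t"] sum.delta' cong: if_cong)
    finally show ?thesis using q(2) j by simp
  qed
  then show ?thesis using c b by (simp add: sum_distrib_left)
qed

section \<open>Inner-product relations on the sphere\<close>

lemma on_sphere_inner_eq_dim_iff:
  fixes X :: "'a::euclidean_space set"
  assumes "on_sphere X" "x \<in> X" "y \<in> X"
  shows "x \<bullet> y = real DIM('a) \<longleftrightarrow> x = y"
proof
  assume xy: "x \<bullet> y = real DIM('a)"
  have "x \<bullet> x = real DIM('a)" "y \<bullet> y = real DIM('a)" using assms unfolding on_sphere_def by auto
  then have "(x - y) \<bullet> (x - y) = 0"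
    using xy by (simp add: inner_diff_left inner_diff_right inner_commute)
  then show "x = y" by simp
qed (use assms in \<open>simp add: on_sphere_def\<close>)

lemma inner_in_Aset':
  fixes X :: "'a::euclidean_space set"
  assumes "on_sphere X" "x \<in> X" "y \<in> X"
  shows "x \<bullet> y \<in> Aset' X"
  using assms unfolding Aset'_def Aset_def on_sphere_def by (cases "x = y") auto

lemma finite_Aset': "finite X \<Longrightarrow> finite (Aset' X)"
proof -
  assume "finite X"
  have "Aset X \<subseteq> (\<lambda>(x, y). x \<bullet> y) ` (X \<times> X)" unfolding Aset_def by force
  then have "finite (Aset X)" using finite_subset \<open>finite X\<close> by blast
  then show ?thesis unfolding Aset'_def by simp
qed

lemma card_Aset':
  fixes X :: "'a::euclidean_space set"
  assumes "finite X" "on_sphere X"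
  shows "card (Aset' X) = Suc (card (Aset X))"
proof -
  have "real DIM('a) \<notin> Aset X"
  proof
    assume "real DIM('a) \<in> Aset X"
    then obtain x y where "x \<in> X" "y \<in> X" "x \<noteq> y" "x \<bullet> y = real DIM('a)"
      unfolding Aset_def by auto
    then show False using on_sphere_inner_eq_dim_iff[OF assms(2)] by blast
  qed
  then show ?thesis using finite_Aset'[OF assms(1)] unfolding Aset'_def by simp
qed

definition inner_rel :: "'a::real_inner set \<Rightarrow> real \<Rightarrow> ('a \<times> 'a) set" where
  "inner_rel X \<alpha> = {(x, y). x \<in> X \<and> y \<in> X \<and> x \<bullet> y = \<alpha>}"

lemma kappa_eq_card_inner_rel: "kappa X \<alpha> = card (inner_rel X \<alpha>)"
  by (simp add: kappa_def inner_rel_def)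

lemma finite_inner_rel: "finite X \<Longrightarrow> finite (inner_rel X \<alpha>)"
  by (rule finite_subset[of _ "X \<times> X"]) (auto simp: inner_rel_def)

lemma inner_rel_dim_eq_Id_on:
  fixes X :: "'a::euclidean_space set"
  assumes "on_sphere X"
  shows "inner_rel X (real DIM('a)) = Id_on X"
  using on_sphere_inner_eq_dim_iff[OF assms] by (auto simp: inner_rel_def Id_on_def)

lemma inner_rel_nonempty:
  fixes X :: "'a::euclidean_space set"
  assumes "X \<noteq> {}" "on_sphere X" "\<alpha> \<in> Aset' X"
  shows "inner_rel X \<alpha> \<noteq> {}"
  using assms inner_rel_dim_eq_Id_on[OF assms(2)]
  unfolding Aset'_def Aset_def by (auto simp: inner_rel_def)

lemma adj_inner_rel:
  "x \<in> X \<Longrightarrow> y \<in> X \<Longrightarrow> adj (inner_rel X \<alpha>) x y = (if x \<bullet> y = \<alpha> then 1 else 0)"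
  by (simp add: adj_def inner_rel_def)

section \<open>The Q-polynomial association scheme\<close>

lemma card_two_step_paths:
  assumes "finite X"
  shows "real (card {z\<in>X. (x, z) \<in> R \<and> (z, y) \<in> S}) = matmul X (adj R) (adj S) x y"
proof -
  have "real (card {z\<in>X. (x, z) \<in> R \<and> (z, y) \<in> S})
      = (\<Sum>z\<in>X. if (x, z) \<in> R \<and> (z, y) \<in> S then 1 else 0)"
    using sum.inter_filter[OF assms, of "\<lambda>_. 1::real"] by simp
  also have "\<dots> = matmul X (adj R) (adj S) x y"
    unfolding matmul_def adj_def by (intro sum.cong) auto
  finally show ?thesis .
qed

lemma matmul_orthogonal_idempotent_combinations:
  fixes s :: nat
  assumes E: "\<forall>i\<le>s. \<forall>j\<le>s. \<forall>x\<in>X. \<forall>y\<in>X.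
      matmul X (E i) (E j) x y = (if i = j then E i x y else 0)"
    and A: "\<forall>x\<in>X. \<forall>y\<in>X. A x y = (\<Sum>i\<le>s. a i * E i x y)"
    and B: "\<forall>x\<in>X. \<forall>y\<in>X. B x y = (\<Sum>i\<le>s. b i * E i x y)"
    and x: "x \<in> X" and y: "y \<in> X"
  shows "matmul X A B x y = (\<Sum>i\<le>s. a i * b i * E i x y)"
proof -
  have "matmul X A B x y = (\<Sum>z\<in>X. (\<Sum>i\<le>s. a i * E i x z) * (\<Sum>j\<le>s. b j * E j z y))"
    unfolding matmul_def using A B x y by (intro sum.cong) simp_all
  also have "\<dots> = (\<Sum>z\<in>X. \<Sum>i\<le>s. \<Sum>j\<le>s. a i * b j * (E i x z * E j z y))"
    by (intro sum.cong) (simp_all add: sum_product mult_ac)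
  also have "\<dots> = (\<Sum>i\<le>s. \<Sum>j\<le>s. \<Sum>z\<in>X. a i * b j * (E i x z * E j z y))"
    by (subst sum.swap) (simp add: sum.swap[of _ X])
  also have "\<dots> = (\<Sum>i\<le>s. \<Sum>j\<le>s. a i * b j * matmul X (E i) (E j) x y)"
    by (simp add: matmul_def sum_distrib_left)
  also have "\<dots> = (\<Sum>i\<le>s. \<Sum>j\<le>s. if i = j then a i * b i * E i x y else 0)"
    using E x y by (intro sum.cong) simp_all
  also have "\<dots> = (\<Sum>i\<le>s. a i * b i * E i x y)"
    by (intro sum.cong refl) simp
  finally show ?thesis .
qed

lemma degree_one_poly_left_inverse:
  fixes p :: "'a::field poly"
  assumes "degree p = 1"
  obtains r where "degree r = 1" "\<forall>t. poly r (poly p t) = t"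
proof -
  define a b where "a = coeff p 0" and "b = coeff p 1"
  have b: "b \<noteq> 0" unfolding b_def using assms leading_coeff_0_iff[of p] by auto
  have "poly p t = a + b * t" for t unfolding a_def b_def poly_altdef assms by simp
  then show ?thesis using b by (intro that[of "[:- a / b, 1 / b:]"]) (auto simp: field_simps)
qed

lemma card_Id_on: "card (Id_on X) = card X"
proof -
  have "Id_on X = (\<lambda>x. (x, x)) ` X" by (auto simp: Id_on_def)
  then show ?thesis by (simp add: card_image inj_on_def)
qed

locale predegree_projections =
  fixes X :: "'a::euclidean_space set" and s :: nat and q :: "nat \<Rightarrow> real poly"
  assumes finite: "finite X" and nonempty: "X \<noteq> {}" and sphere: "on_sphere X"
    and card_Aset: "card (Aset X) = s"
    and predegree: "predegree_polys X s q"
    and Fmat_eq: "\<And>i x y. i \<le> s \<Longrightarrow> x \<in> X \<Longrightarrow> y \<in> X \<Longrightarrow>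
      Fmat X i x y = poly (q i) (x \<bullet> y) / real (card X)"
begin

definition weight :: "real \<Rightarrow> real" where
  "weight \<alpha> = real (kappa X \<alpha>) / real (card X) ^ 2"

lemma card_pos: "0 < real (card X)"
  using finite nonempty by (simp add: card_gt_0_iff)

lemma card_Aset'_eq: "card (Aset' X) = Suc s"
  using card_Aset'[OF finite sphere] card_Aset by simp

lemma dim_in_Aset': "real DIM('a) \<in> Aset' X"
  by (simp add: Aset'_def)

lemma weight_pos: "\<alpha> \<in> Aset' X \<Longrightarrow> 0 < weight \<alpha>"
proof -
  assume "\<alpha> \<in> Aset' X"
  then have "inner_rel X \<alpha> \<noteq> {}" by (rule inner_rel_nonempty[OF nonempty sphere])
  then have "0 < kappa X \<alpha>"
    using finite_inner_rel[OF finite] by (simp add: kappa_eq_card_inner_rel card_gt_0_iff)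
  then show ?thesis using card_pos by (simp add: weight_def)
qed

lemma weight_dim: "weight (real DIM('a)) = 1 / real (card X)"
proof -
  have "kappa X (real DIM('a)) = card X"
    by (simp add: kappa_eq_card_inner_rel inner_rel_dim_eq_Id_on[OF sphere] card_Id_on)
  then show ?thesis using card_pos by (simp add: weight_def power2_eq_square)
qed

lemma degree_q: "k \<le> s \<Longrightarrow> degree (q k) = k"
  using predegree by (simp add: predegree_polys_def)

lemma pre_ip_eq_weighted_sum:
  "pre_ip X p r = (\<Sum>a\<in>Aset' X. weight a * poly p a * poly r a)"
  unfolding pre_ip_def weight_def sum_distrib_left by (intro sum.cong) simp_all

lemma q_orthogonal:
  "\<forall>k\<le>s. \<forall>h\<le>s. (\<Sum>a\<in>Aset' X. weight a * poly (q k) a * poly (q h) a) =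
     (if k = h then poly (q k) (real DIM('a)) else 0)"
  using predegree unfolding predegree_polys_def pre_ip_eq_weighted_sum by blast

lemma q_nonzero: "k \<le> s \<Longrightarrow> q k \<noteq> 0"
proof
  assume "k \<le> s" "q k = 0"
  then have "k = 0" using degree_q[of k] by simp
  obtain x y where "x \<in> X" "y \<in> X" "Fmat X 0 x y \<noteq> 0"
    using Fmat_0_nonzero[OF finite nonempty] .
  then show False using Fmat_eq[of 0 x y] \<open>q k = 0\<close> \<open>k = 0\<close> by simp
qed

lemma q_nonzero_degree: "\<forall>k\<le>s. q k \<noteq> 0 \<and> degree (q k) = k"
  using q_nonzero degree_q by blast

lemma q_dim_nonzero: "k \<le> s \<Longrightarrow> poly (q k) (real DIM('a)) \<noteq> 0"
proof -
  assume k: "k \<le> s"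
  have "0 < (\<Sum>a\<in>Aset' X. weight a * poly (q k) a * poly (q k) a)"
  proof (rule weighted_sum_poly_square_pos[OF finite_Aset'[OF finite] _ _ q_nonzero[OF k]])
    show "degree (q k) < card (Aset' X)" using degree_q[OF k] k card_Aset'_eq by simp
    show "\<forall>a\<in>Aset' X. 0 < weight a" using weight_pos by blast
  qed
  then show ?thesis using q_orthogonal k by simp
qed

lemma Fmat_sum_eq_Id:
  assumes "x \<in> X" "y \<in> X"
  shows "(\<Sum>i\<le>s. Fmat X i x y) = (if x = y then 1 else 0)"
proof -
  have "(\<Sum>i\<le>s. Fmat X i x y) = (\<Sum>i\<le>s. poly (q i) (x \<bullet> y) / real (card X))"
    using assms by (intro sum.cong) (simp_all add: Fmat_eq)
  also have "\<dots> = weight (real DIM('a)) * (\<Sum>i\<le>s. poly (q i) (x \<bullet> y))"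
    by (simp add: weight_dim sum_divide_distrib)
  also have "\<dots> = (if x \<bullet> y = real DIM('a) then 1 else 0)"
    using q_dim_nonzero by (intro orthogonal_polys_indicator_at_norm_point[OF finite_Aset'[OF finite]
        card_Aset'_eq dim_in_Aset' q_nonzero_degree _ q_orthogonal inner_in_Aset'[OF sphere assms],
        symmetric]) blast
  finally show ?thesis using on_sphere_inner_eq_dim_iff[OF sphere assms] by simp
qed

lemma adj_in_span_Fmat:
  assumes "\<alpha> \<in> Aset' X"
  obtains c where "\<forall>x\<in>X. \<forall>y\<in>X. adj (inner_rel X \<alpha>) x y = (\<Sum>i\<le>s. c i * Fmat X i x y)"
proof -
  obtain c where c: "\<forall>b\<in>Aset' X. (if b = \<alpha> then 1 else 0) = (\<Sum>i\<le>s. c i * poly (q i) b)"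
    using point_indicator_expansion[OF finite_Aset'[OF finite] card_Aset'_eq assms q_nonzero_degree] .
  have "adj (inner_rel X \<alpha>) x y = (\<Sum>i\<le>s. (real (card X) * c i) * Fmat X i x y)"
    if xy: "x \<in> X" "y \<in> X" for x y
  proof -
    have "adj (inner_rel X \<alpha>) x y = (if x \<bullet> y = \<alpha> then 1 else 0)"
      by (rule adj_inner_rel[OF xy])
    also have "\<dots> = (\<Sum>i\<le>s. c i * poly (q i) (x \<bullet> y))"
      by (rule c[rule_format, OF inner_in_Aset'[OF sphere xy]])
    also have "\<dots> = (\<Sum>i\<le>s. (real (card X) * c i) * Fmat X i x y)"
      using xy card_pos by (intro sum.cong) (simp_all add: Fmat_eq)
    finally show ?thesis .
  qed
  then show ?thesis by (intro that[of "\<lambda>i. real (card X) * c i"]) blast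
qed

lemma Fmat_in_span_adj:
  assumes "i \<le> s" "x \<in> X" "y \<in> X"
  shows "Fmat X i x y = (\<Sum>\<alpha>\<in>Aset' X. (poly (q i) \<alpha> / real (card X)) * adj (inner_rel X \<alpha>) x y)"
proof -
  have "(\<Sum>\<alpha>\<in>Aset' X. (poly (q i) \<alpha> / real (card X)) * adj (inner_rel X \<alpha>) x y)
      = (\<Sum>\<alpha>\<in>Aset' X. if x \<bullet> y = \<alpha> then poly (q i) \<alpha> / real (card X) else 0)"
    by (intro sum.cong) (simp_all add: adj_inner_rel[OF assms(2,3)])
  also have "\<dots> = poly (q i) (x \<bullet> y) / real (card X)"
    using inner_in_Aset'[OF sphere assms(2,3)] finite_Aset'[OF finite] by simp
  finally show ?thesis using Fmat_eq[OF assms] by simp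
qed

lemma intersection_numbers:
  assumes "\<alpha> \<in> Aset' X" "\<beta> \<in> Aset' X"
  shows "\<exists>p::nat. \<forall>(x, y)\<in>inner_rel X \<gamma>.
    card {z\<in>X. (x, z) \<in> inner_rel X \<alpha> \<and> (z, y) \<in> inner_rel X \<beta>} = p"
proof -
  obtain a where a: "\<forall>x\<in>X. \<forall>y\<in>X. adj (inner_rel X \<alpha>) x y = (\<Sum>i\<le>s. a i * Fmat X i x y)"
    using adj_in_span_Fmat[OF assms(1)] .
  obtain b where b: "\<forall>x\<in>X. \<forall>y\<in>X. adj (inner_rel X \<beta>) x y = (\<Sum>i\<le>s. b i * Fmat X i x y)"
    using adj_in_span_Fmat[OF assms(2)] .
  have F: "\<forall>i\<le>s. \<forall>j\<le>s. \<forall>x\<in>X. \<forall>y\<in>X.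
      matmul X (Fmat X i) (Fmat X j) x y = (if i = j then Fmat X i x y else 0)"
    using Fmat_mult[OF finite nonempty] by blast
  define V where "V = (\<Sum>i\<le>s. a i * b i * (poly (q i) \<gamma> / real (card X)))"
  have "real (card {z\<in>X. (x, z) \<in> inner_rel X \<alpha> \<and> (z, y) \<in> inner_rel X \<beta>}) = V"
    if "(x, y) \<in> inner_rel X \<gamma>" for x y
  proof -
    have xy: "x \<in> X" "y \<in> X" "x \<bullet> y = \<gamma>" using that by (auto simp: inner_rel_def)
    have "real (card {z\<in>X. (x, z) \<in> inner_rel X \<alpha> \<and> (z, y) \<in> inner_rel X \<beta>})
        = (\<Sum>i\<le>s. a i * b i * Fmat X i x y)"
      unfolding card_two_step_paths[OF finite]
      by (rule matmul_orthogonal_idempotent_combinations[OF F a b xy(1,2)])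
    also have "\<dots> = V"
      unfolding V_def using xy by (intro sum.cong) (simp_all add: Fmat_eq)
    finally show ?thesis .
  qed
  then have "\<forall>(x, y)\<in>inner_rel X \<gamma>.
      card {z\<in>X. (x, z) \<in> inner_rel X \<alpha> \<and> (z, y) \<in> inner_rel X \<beta>} = nat \<lfloor>V\<rfloor>"
    by (metis (mono_tags, lifting) case_prodI2 floor_of_nat nat_int)
  then show ?thesis by blast
qed

lemma is_sym_assoc_scheme: "sym_assoc_scheme X (Aset' X) (inner_rel X)"
  unfolding sym_assoc_scheme_def
proof (intro conjI)
  show "finite X" by (rule finite)
  show "finite (Aset' X)" by (rule finite_Aset'[OF finite])
  show "\<forall>\<alpha>\<in>Aset' X. inner_rel X \<alpha> \<noteq> {} \<and> inner_rel X \<alpha> \<subseteq> X \<times> X"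
    using inner_rel_nonempty[OF nonempty sphere] by (auto simp: inner_rel_def)
  show "\<forall>\<alpha>\<in>Aset' X. \<forall>\<beta>\<in>Aset' X. \<alpha> \<noteq> \<beta> \<longrightarrow> inner_rel X \<alpha> \<inter> inner_rel X \<beta> = {}"
    by (auto simp: inner_rel_def)
  show "(\<Union>\<alpha>\<in>Aset' X. inner_rel X \<alpha>) = X \<times> X"
    using inner_in_Aset'[OF sphere] by (auto simp: inner_rel_def)
  show "\<exists>\<alpha>\<in>Aset' X. inner_rel X \<alpha> = Id_on X"
    using dim_in_Aset' inner_rel_dim_eq_Id_on[OF sphere] by blast
  show "\<forall>\<alpha>\<in>Aset' X. converse (inner_rel X \<alpha>) = inner_rel X \<alpha>"
    by (auto simp: inner_rel_def inner_commute)
  show "\<forall>\<alpha>\<in>Aset' X. \<forall>\<beta>\<in>Aset' X. \<forall>\<gamma>\<in>Aset' X. \<exists>p::nat. \<forall>(x, y)\<in>inner_rel X \<gamma>.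
      card {z\<in>X. (x, z) \<in> inner_rel X \<alpha> \<and> (z, y) \<in> inner_rel X \<beta>} = p"
    using intersection_numbers by blast
qed

lemma is_primitive_idempotents: "primitive_idempotents X (Aset' X) (inner_rel X) (Fmat X) s"
  unfolding primitive_idempotents_def
proof (intro conjI)
  show "\<forall>i\<le>s. \<exists>c. \<forall>x\<in>X. \<forall>y\<in>X. Fmat X i x y = (\<Sum>\<alpha>\<in>Aset' X. c \<alpha> * adj (inner_rel X \<alpha>) x y)"
  proof (intro allI impI)
    fix i assume "i \<le> s"
    then show "\<exists>c. \<forall>x\<in>X. \<forall>y\<in>X. Fmat X i x y = (\<Sum>\<alpha>\<in>Aset' X. c \<alpha> * adj (inner_rel X \<alpha>) x y)"
      using Fmat_in_span_adj by (intro exI[of _ "\<lambda>\<alpha>. poly (q i) \<alpha> / real (card X)"]) blast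
  qed
  show "\<forall>i\<le>s. \<exists>x\<in>X. \<exists>y\<in>X. Fmat X i x y \<noteq> 0"
  proof (intro allI impI)
    fix i assume i: "i \<le> s"
    obtain x where x: "x \<in> X" using nonempty by blast
    then have "Fmat X i x x = poly (q i) (real DIM('a)) / real (card X)"
      using Fmat_eq[OF i x x] sphere by (simp add: on_sphere_def)
    then have "Fmat X i x x \<noteq> 0" using q_dim_nonzero[OF i] card_pos by simp
    then show "\<exists>x\<in>X. \<exists>y\<in>X. Fmat X i x y \<noteq> 0" using x by blast
  qed
  show "\<forall>i\<le>s. \<forall>j\<le>s. \<forall>x\<in>X. \<forall>y\<in>X.
      matmul X (Fmat X i) (Fmat X j) x y = (if i = j then Fmat X i x y else 0)"
    using Fmat_mult[OF finite nonempty] by blast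
  show "\<forall>x\<in>X. \<forall>y\<in>X. (\<Sum>i\<le>s. Fmat X i x y) = (if x = y then 1 else 0)"
    using Fmat_sum_eq_Id by blast
  show "\<forall>\<alpha>\<in>Aset' X. \<exists>c. \<forall>x\<in>X. \<forall>y\<in>X. adj (inner_rel X \<alpha>) x y = (\<Sum>i\<le>s. c i * Fmat X i x y)"
  proof
    fix \<alpha> assume "\<alpha> \<in> Aset' X"
    then obtain c where "\<forall>x\<in>X. \<forall>y\<in>X. adj (inner_rel X \<alpha>) x y = (\<Sum>i\<le>s. c i * Fmat X i x y)"
      by (rule adj_in_span_Fmat)
    then show "\<exists>c. \<forall>x\<in>X. \<forall>y\<in>X. adj (inner_rel X \<alpha>) x y = (\<Sum>i\<le>s. c i * Fmat X i x y)"
      by (rule exI[of _ c])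
  qed
qed

lemma Fmat_polynomial_in_Fmat_1:
  assumes i: "i \<le> s"
  obtains v where "degree v = i"
    "\<forall>x\<in>X. \<forall>y\<in>X. real (card X) * Fmat X i x y = poly v (real (card X) * Fmat X 1 x y)"
proof (cases "i = 0")
  case True
  then have "[:coeff (q i) 0:] = q i" using degree_q[OF i] by (intro degree_0_id) simp
  then have "poly (q i) t = coeff (q i) 0" for t
    by (metis poly_pCons poly_0 mult_zero_right add.right_neutral)
  then show ?thesis using that[of "q i"] Fmat_eq[OF i] degree_q[OF i] card_pos by simp
next
  case False
  then have s: "1 \<le> s" using i by simp
  obtain r where r: "degree r = 1" "\<forall>t. poly r (poly (q 1) t) = t"
    using degree_one_poly_left_inverse[OF degree_q[OF s]] .
  show ?thesis
  proof (rule that[of "pcompose (q i) r"])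
    show "degree (pcompose (q i) r) = i" by (simp add: degree_pcompose r(1) degree_q[OF i])
    show "\<forall>x\<in>X. \<forall>y\<in>X.
        real (card X) * Fmat X i x y = poly (pcompose (q i) r) (real (card X) * Fmat X 1 x y)"
      using Fmat_eq[OF i] Fmat_eq[OF s] r(2) card_pos by (simp add: poly_pcompose)
  qed
qed

theorem is_Q_poly_scheme: "Q_poly_scheme X (Fmat X) s"
proof -
  have R: "(\<lambda>\<alpha>. {(x, y). x \<in> X \<and> y \<in> X \<and> x \<bullet> y = \<alpha>}) = inner_rel X"
    by (simp add: fun_eq_iff inner_rel_def)
  show ?thesis unfolding Q_poly_scheme_def Let_def R
  proof (intro conjI is_sym_assoc_scheme is_primitive_idempotents allI impI)
    fix i assume "i \<le> s"
    then obtain v where "degree v = i"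
      "\<forall>x\<in>X. \<forall>y\<in>X. real (card X) * Fmat X i x y = poly v (real (card X) * Fmat X 1 x y)"
      by (rule Fmat_polynomial_in_Fmat_1)
    then show "\<exists>v. degree v = i \<and>
        (\<forall>x\<in>X. \<forall>y\<in>X. real (card X) * Fmat X i x y = poly v (real (card X) * Fmat X 1 x y))"
      by blast
  qed
qed

end

theorem lemma3p6:
  fixes X :: "'a::euclidean_space set" and s :: nat and q :: "nat \<Rightarrow> real poly"
  assumes "finite X" and "X \<noteq> {}"
    and "on_sphere X"
    and "design2 X"
    and "card (Aset X) = s"
    and "design_degree X = s"
    and "predegree_polys X s q"
    and "\<forall>i\<le>s. \<forall>x\<in>X. \<forall>y\<in>X.
           (1 / real (card X)) * poly (q i) (real (card X) * ((1 / real (card X)) * (x \<bullet> y)))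
           = Fmat X i x y"
  shows "Q_poly_scheme X (Fmat X) s"
proof -
  have "Fmat X i x y = poly (q i) (x \<bullet> y) / real (card X)" if "i \<le> s" "x \<in> X" "y \<in> X" for i x y
    using assms(1,2,8) that by (simp add: card_gt_0_iff)
  then interpret predegree_projections X s q
    using assms(1-3,5,7) by unfold_locales
  show ?thesis by (rule is_Q_poly_scheme)
qed

end
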